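(* Let $b>1$, $p\in\mathbb{R}$, $s<pb$, and set $\tilde c_s=\frac{p^2-s^2-b^2+1}{2(pb-s)}$ and $\tilde A_s=s^2-2\tilde c_ss-1$ $(=p^2-2bp\tilde c_s-b^2)$. The following are equivalent: (1) $s\ge\tilde c_s$; (2) there exists a unique function $\tilde\psi_s$, continuous on $[1,b]$ and differentiable on $(1,b)$, with $\tilde\psi_s(1)=s$, $\tilde\psi_s(b)=p$ and $\tilde\psi_s^2-2\tilde c_sx\tilde\psi_s-x^2=\tilde A_s$ on $[1,b]$; explicitly $\tilde\psi_s(x)=\tilde c_sx+\sqrt{\tilde A_s+(1+\tilde c_s^2)x^2}$. Moreover this solution satisfies $(x\tilde\psi_s)'>0$. *)

theory Defs
  imports "HOL-Analysis.Analysis"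
begin

definition c_tilde :: "real \<Rightarrow> real \<Rightarrow> real \<Rightarrow> real" where
  "c_tilde b p s = (p^2 - s^2 - b^2 + 1) / (2 * (p * b - s))"

definition A_tilde :: "real \<Rightarrow> real \<Rightarrow> real \<Rightarrow> real" where
  "A_tilde b p s = s^2 - 2 * c_tilde b p s * s - 1"

definition psi_cond :: "real \<Rightarrow> real \<Rightarrow> real \<Rightarrow> (real \<Rightarrow> real) \<Rightarrow> bool" where
  "psi_cond b p s \<psi> \<longleftrightarrow>
     continuous_on {1..b} \<psi> \<and> \<psi> differentiable_on {1<..<b} \<and>
     \<psi> 1 = s \<and> \<psi> b = p \<and>
     (\<forall>x\<in>{1..b}. (\<psi> x)^2 - 2 * c_tilde b p s * x * \<psi> x - x^2 = A_tilde b p s)"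

end

theory Submission
  imports Defs
begin

text \<open>Writing \<open>c = c_tilde b p s\<close>, the relation \<open>\<psi>\<^sup>2 - 2 c x \<psi> - x\<^sup>2 = A_tilde b p s\<close> says
  \<open>(\<psi> x - c x)\<^sup>2 = D x\<close> with \<open>D x = (s - c)\<^sup>2 + (1 + c\<^sup>2) (x\<^sup>2 - 1)\<close>, which is positive on \<open>(1, b]\<close>.
  So \<open>\<psi> x - c x\<close> has no zero there, and since it equals \<open>p - c b > 0\<close> at \<open>b\<close>, continuity forces
  \<open>\<psi> x = c x + sqrt (D x)\<close> on \<open>(1, b]\<close>. At \<open>x = 1\<close> this leaves \<open>s - c = \<psi> 1 - c = sqrt (D 1) = \<bar>s - c\<bar>\<close>,
  which is possible exactly when \<open>c \<le> s\<close>.\<close>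

definition psi_tilde :: "real \<Rightarrow> real \<Rightarrow> real \<Rightarrow> real \<Rightarrow> real" where
  "psi_tilde b p s x =
     c_tilde b p s * x + sqrt (A_tilde b p s + (1 + (c_tilde b p s)^2) * x^2)"

lemma quadratic_relation_iff_square:
  fixes c x y A :: real
  shows "y^2 - 2 * c * x * y - x^2 = A \<longleftrightarrow> (y - c * x)^2 = A + (1 + c^2) * x^2"
  by (auto simp: power2_eq_square algebra_simps)

lemma A_tilde_discriminant:
  "A_tilde b p s + (1 + (c_tilde b p s)^2) * x^2
     = (s - c_tilde b p s)^2 + (1 + (c_tilde b p s)^2) * (x^2 - 1)"
  unfolding A_tilde_def by (simp add: power2_eq_square algebra_simps)

lemma A_tilde_discriminant_pos:
  fixes b p s x :: real
  assumes "x > 1"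
  shows "A_tilde b p s + (1 + (c_tilde b p s)^2) * x^2 > 0"
proof -
  have "x^2 - 1 > 0" using assms by (simp add: one_less_power)
  then have "(1 + (c_tilde b p s)^2) * (x^2 - 1) > 0" by (simp add: add_pos_nonneg)
  then show ?thesis unfolding A_tilde_discriminant by (simp add: add_nonneg_pos)
qed

lemma A_tilde_discriminant_nonneg:
  fixes b p s x :: real
  assumes "x \<ge> 1"
  shows "A_tilde b p s + (1 + (c_tilde b p s)^2) * x^2 \<ge> 0"
  using assms A_tilde_discriminant[of b p s 1] A_tilde_discriminant_pos[of x b p s]
  by (cases "x = 1") auto

lemma c_tilde_equation:
  assumes "s \<noteq> p * b"
  shows "c_tilde b p s * (2 * (p * b - s)) = p^2 - s^2 - b^2 + 1"
  using assms unfolding c_tilde_def by simp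

text \<open>Equivalent to the second expression \<open>A_tilde b p s = p\<^sup>2 - 2 b p c - b\<^sup>2\<close> of the paper.\<close>
lemma A_tilde_discriminant_at_b:
  assumes "s \<noteq> p * b"
  shows "A_tilde b p s + (1 + (c_tilde b p s)^2) * b^2 = (p - c_tilde b p s * b)^2"
  using c_tilde_equation[OF assms] unfolding A_tilde_def
  by (simp add: power2_eq_square algebra_simps)

lemma c_tilde_below_endpoint:
  assumes "b > 1" and "s < p * b"
  shows "c_tilde b p s * b < p"
proof -
  let ?c = "c_tilde b p s"
  have "2 * (p * b - s) * (p - ?c * b) = 2 * p * (p * b - s) - b * (?c * (2 * (p * b - s)))"
    by (simp add: algebra_simps)
  also have "\<dots> = 2 * p * (p * b - s) - b * (p^2 - s^2 - b^2 + 1)"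
    using c_tilde_equation[of s p b] assms(2) by simp
  also have "\<dots> = b * (p^2 + s^2 + b^2 - 1) - 2 * p * s"
    by (simp add: algebra_simps power2_eq_square)
  also have "\<dots> > 0"
  proof -
    have "p^2 + s^2 \<le> b * (p^2 + s^2)" using assms(1) mult_right_mono[of 1 b "p^2 + s^2"] by simp
    moreover have "2 * p * s \<le> p^2 + s^2" using sum_squares_bound[of p s] by simp
    moreover have "b * (b^2 - 1) > 0" using assms(1) by (simp add: one_less_power)
    ultimately show ?thesis by (simp add: algebra_simps)
  qed
  finally show ?thesis using assms(2) by (simp add: zero_less_mult_iff)
qed

lemma pos_at_left_if_nonvanishing:
  fixes g :: "real \<Rightarrow> real"
  assumes "continuous_on {a..b} g" and "a \<le> b" and "g b > 0"
    and "\<forall>y\<in>{a..b}. g y \<noteq> 0"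
  shows "g a > 0"
proof (rule ccontr)
  assume "\<not> g a > 0"
  then obtain z where "a \<le> z" "z \<le> b" "g z = 0"
    using IVT'[of g a 0 b] assms(1-3) by auto
  then show False using assms(4) by auto
qed

lemma psi_cond_above_line:
  assumes "b > 1" and "s < p * b" and "psi_cond b p s \<psi>" and "x \<in> {1<..b}"
  shows "\<psi> x - c_tilde b p s * x > 0"
proof -
  let ?g = "\<lambda>y. \<psi> y - c_tilde b p s * y"
  have "continuous_on {x..b} ?g"
    using assms(3,4) unfolding psi_cond_def
    by (intro continuous_intros) (auto elim: continuous_on_subset)
  moreover have "?g b > 0"
    using assms(3) c_tilde_below_endpoint[OF assms(1,2)] unfolding psi_cond_def by simp
  moreover have "?g y \<noteq> 0" if "y \<in> {x..b}" for y
  proof -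
    have "y > 1" "y \<in> {1..b}" using that assms(4) by auto
    then have "(?g y)^2 = A_tilde b p s + (1 + (c_tilde b p s)^2) * y^2"
      using assms(3) quadratic_relation_iff_square unfolding psi_cond_def by blast
    with A_tilde_discriminant_pos[of y b p s] \<open>y > 1\<close> show ?thesis by auto
  qed
  ultimately show ?thesis
    using pos_at_left_if_nonvanishing[of x b ?g] assms(4) by auto
qed

lemma psi_cond_eq_psi_tilde_gt_1:
  assumes "b > 1" and "s < p * b" and "psi_cond b p s \<psi>" and "x \<in> {1<..b}"
  shows "\<psi> x = psi_tilde b p s x"
proof -
  have "(\<psi> x - c_tilde b p s * x)^2 = A_tilde b p s + (1 + (c_tilde b p s)^2) * x^2"
    using assms(3,4) quadratic_relation_iff_square unfolding psi_cond_def by auto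
  then have "sqrt (A_tilde b p s + (1 + (c_tilde b p s)^2) * x^2) = \<bar>\<psi> x - c_tilde b p s * x\<bar>"
    by (metis real_sqrt_abs)
  also have "\<dots> = \<psi> x - c_tilde b p s * x"
    using psi_cond_above_line[OF assms] by simp
  finally show ?thesis unfolding psi_tilde_def by simp
qed

text \<open>For \<open>s < c\<close> the function \<open>\<psi> x - c x\<close> would be nonvanishing on all of \<open>[1, b]\<close>
  yet change sign.\<close>
lemma psi_cond_imp_c_tilde_le:
  assumes "b > 1" and "s < p * b" and "psi_cond b p s \<psi>"
  shows "c_tilde b p s \<le> s"
proof (rule ccontr)
  let ?g = "\<lambda>y. \<psi> y - c_tilde b p s * y"
  assume "\<not> c_tilde b p s \<le> s"
  then have "?g 1 < 0" using assms(3) unfolding psi_cond_def by simp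
  moreover have "continuous_on {1..b} ?g"
    using assms(3) unfolding psi_cond_def by (intro continuous_intros) auto
  moreover have "?g y \<noteq> 0" if "y \<in> {1..b}" for y
    using that \<open>?g 1 < 0\<close> psi_cond_above_line[OF assms, of y]
    by (cases "y = 1") auto
  moreover have "?g b > 0" using psi_cond_above_line[OF assms, of b] assms(1) by simp
  ultimately show False
    using pos_at_left_if_nonvanishing[of 1 b ?g] assms(1) by auto
qed

lemma psi_tilde_at_1:
  assumes "c_tilde b p s \<le> s"
  shows "psi_tilde b p s 1 = s"
  using assms A_tilde_discriminant[of b p s 1] unfolding psi_tilde_def by simp

lemma psi_tilde_at_b:
  assumes "b > 1" and "s < p * b"
  shows "psi_tilde b p s b = p"
  using A_tilde_discriminant_at_b[of s p b] c_tilde_below_endpoint[OF assms] assms(2)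
  unfolding psi_tilde_def by simp

lemma psi_cond_eq_psi_tilde:
  assumes "b > 1" and "s < p * b" and "psi_cond b p s \<psi>" and "x \<in> {1..b}"
  shows "\<psi> x = psi_tilde b p s x"
proof (cases "x = 1")
  case True
  then show ?thesis
    using assms(3) psi_tilde_at_1[OF psi_cond_imp_c_tilde_le[OF assms(1-3)]]
    unfolding psi_cond_def by simp
next
  case False
  then show ?thesis using psi_cond_eq_psi_tilde_gt_1[OF assms(1-3)] assms(4) by simp
qed

lemma psi_tilde_has_real_derivative:
  fixes b p s x :: real
  assumes "x > 1"
  defines "D \<equiv> A_tilde b p s + (1 + (c_tilde b p s)^2) * x^2"
  shows "(psi_tilde b p s has_real_derivative
           c_tilde b p s + (1 + (c_tilde b p s)^2) * x / sqrt D) (at x)"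
proof -
  have "D > 0" unfolding D_def using A_tilde_discriminant_pos[OF assms(1)] .
  then show ?thesis
    unfolding psi_tilde_def[abs_def] D_def
    by (auto intro!: derivative_eq_intros simp: field_simps)
qed

lemma psi_cond_psi_tilde:
  assumes "b > 1" and "s < p * b" and "c_tilde b p s \<le> s"
  shows "psi_cond b p s (psi_tilde b p s)"
  unfolding psi_cond_def
proof (intro conjI ballI)
  show "continuous_on {1..b} (psi_tilde b p s)"
    unfolding psi_tilde_def by (intro continuous_intros)
  show "psi_tilde b p s differentiable_on {1<..<b}"
    unfolding differentiable_on_def
  proof
    fix x :: real
    assume "x \<in> {1<..<b}"
    then have "psi_tilde b p s differentiable at x"
      using psi_tilde_has_real_derivative[of x b p s] real_differentiable_def by auto
    then show "psi_tilde b p s differentiable at x within {1<..<b}"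
      by (rule differentiable_at_withinI)
  qed
  show "psi_tilde b p s 1 = s" using psi_tilde_at_1[OF assms(3)] .
  show "psi_tilde b p s b = p" using psi_tilde_at_b[OF assms(1,2)] .
next
  fix x :: real
  assume "x \<in> {1..b}"
  then have "(psi_tilde b p s x - c_tilde b p s * x)^2
               = A_tilde b p s + (1 + (c_tilde b p s)^2) * x^2"
    using A_tilde_discriminant_nonneg[of x b p s] unfolding psi_tilde_def by simp
  then show "(psi_tilde b p s x)^2 - 2 * c_tilde b p s * x * psi_tilde b p s x - x^2
               = A_tilde b p s"
    using quadratic_relation_iff_square by blast
qed

lemma times_psi_tilde_derivative_pos:
  fixes b p s x :: real
  assumes "x > 1"
  obtains d where "((\<lambda>t. t * psi_tilde b p s t) has_real_derivative d) (at x)" and "d > 0"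
proof -
  let ?c = "c_tilde b p s"
  define r where "r = sqrt (A_tilde b p s + (1 + ?c^2) * x^2)"
  have "r > 0" unfolding r_def using A_tilde_discriminant_pos[of x b p s] assms by simp
  have r_sq: "r^2 = A_tilde b p s + (1 + ?c^2) * x^2"
    unfolding r_def using A_tilde_discriminant_pos[of x b p s] assms by simp
  define d where "d = psi_tilde b p s x + (?c + (1 + ?c^2) * x / r) * x"
  have "((\<lambda>t. t * psi_tilde b p s t) has_real_derivative d) (at x)"
    unfolding d_def r_def
    using DERIV_mult[OF DERIV_ident psi_tilde_has_real_derivative[of x b p s, OF assms]] by simp
  moreover have "d = ((r + ?c * x)^2 + x^2) / r"
    unfolding d_def psi_tilde_def r_def[symmetric] using \<open>r > 0\<close> r_sq
    by (simp add: field_simps power2_eq_square)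
  then have "d > 0" using \<open>r > 0\<close> assms by (simp add: add_nonneg_pos)
  ultimately show ?thesis using that by blast
qed

lemma psi_cond_times_derivative_pos:
  assumes "b > 1" and "s < p * b" and "psi_cond b p s \<psi>" and "x \<in> {1<..<b}"
  shows "deriv (\<lambda>t. t * \<psi> t) x > 0"
proof -
  obtain d where d: "((\<lambda>t. t * psi_tilde b p s t) has_real_derivative d) (at x)" "d > 0"
    using times_psi_tilde_derivative_pos[of x b p s] assms(4) by auto
  have \<psi>_deriv: "((\<lambda>t. t * \<psi> t) has_real_derivative d) (at x)"
    by (rule has_field_derivative_transform_within_open[OF d(1), of "{1<..<b}"])
       (use assms psi_cond_eq_psi_tilde_gt_1[OF assms(1-3)] in auto)
  show ?thesis using DERIV_imp_deriv[OF \<psi>_deriv] d(2) by simp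
qed

theorem lemma4p5:
  fixes b p s :: real
  assumes "b > 1" and "s < p * b"
  shows "(s \<ge> c_tilde b p s \<longleftrightarrow>
           (\<exists>\<psi>. psi_cond b p s \<psi> \<and>
              (\<forall>\<phi>. psi_cond b p s \<phi> \<longrightarrow> (\<forall>x\<in>{1..b}. \<phi> x = \<psi> x)))) \<and>
         (s \<ge> c_tilde b p s \<longrightarrow>
           (\<forall>\<psi>. psi_cond b p s \<psi> \<longrightarrow>
             (\<forall>x\<in>{1..b}. \<psi> x = c_tilde b p s * x
                 + sqrt (A_tilde b p s + (1 + (c_tilde b p s)^2) * x^2)) \<and>
             (\<forall>x\<in>{1<..<b}. deriv (\<lambda>t. t * \<psi> t) x > 0)))"
proof (intro conjI impI allI iffI)
  assume "s \<ge> c_tilde b p s"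
  then show "\<exists>\<psi>. psi_cond b p s \<psi> \<and> (\<forall>\<phi>. psi_cond b p s \<phi> \<longrightarrow> (\<forall>x\<in>{1..b}. \<phi> x = \<psi> x))"
    using psi_cond_psi_tilde[OF assms] psi_cond_eq_psi_tilde[OF assms] by blast
next
  assume "\<exists>\<psi>. psi_cond b p s \<psi> \<and> (\<forall>\<phi>. psi_cond b p s \<phi> \<longrightarrow> (\<forall>x\<in>{1..b}. \<phi> x = \<psi> x))"
  then show "s \<ge> c_tilde b p s" using psi_cond_imp_c_tilde_le[OF assms] by blast
next
  fix \<psi> assume "psi_cond b p s \<psi>"
  then show "\<forall>x\<in>{1..b}. \<psi> x = c_tilde b p s * x
               + sqrt (A_tilde b p s + (1 + (c_tilde b p s)^2) * x^2)"
    and "\<forall>x\<in>{1<..<b}. deriv (\<lambda>t. t * \<psi> t) x > 0"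
    using psi_cond_eq_psi_tilde[OF assms] psi_cond_times_derivative_pos[OF assms]
    unfolding psi_tilde_def by auto
qed

end
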